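(* Let $\mathbb K=[-1,1]$ and $H(x,p)=v_+(x)(e^{2p}-1)+v_-(x)(e^{-2p}-1)$, where $v_\pm:[-1,1]\to[0,\infty)$ satisfy: $v_-(-1)=0$, $v_-(x)>0$ for $x\ne-1$, $v_+(1)=0$, $v_+(x)>0$ for $x\ne1$; $v_\pm$ extend to $C^2$ functions on an open set containing $[-1,1]$; $v_+'(1)<0$ and $v_-'(-1)>0$. Then $H$ satisfies Condition (H).
   Context: The Lagrangian is $\mathcal L(x,v)=\sup_{p\in\mathbb R}(pv-H(x,p))\in(-\infty,\infty]$. Condition (H) on $H:[-1,1]\times\mathbb R\to\mathbb R$: $H(x,0)=0$ for all $x$, and (H1) $H$ is $C^2$ with $\partial_p^2H>0$ on $[-1,1]\times\mathbb R$ and is the restriction of a $C^2$ function on $(-1-\epsilon,1+\epsilon)\times\mathbb R$ for some $\epsilon>0$. (H2) for every compact $K\subseteq(-1,1)$ there is $\theta_K:[0,\infty)\to[0,\infty)$ with $\theta_K(r)/r\to\infty$ as $r\to\infty$; for every $M\ge0$ a constant $k_M$ with $\theta_K(r+m)\le k_M(1+\theta_K(r))$ for all $m\in[0,M]$, $r\ge0$; constants $c_K,C_K$ with $\mathcal L(x,v)\ge\theta_K(|v|)-c_K$ and $|\partial_x\mathcal L(x,v)|+|\partial_v\mathcal L(x,v)|\le C_K\theta_K(|v|)$ for all $x\in K,v\in\mathbb R$. (H3) for each compact $K\subseteq(-1,1)$, $\lim_{|p|\to\infty}\inf_{x\in K}H(x,p)/|p|=\infty$; moreover $\lim_{p\to\infty}H(-1,p)/p=\infty$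 and $\lim_{p\to-\infty}H(1,p)/(-p)=\infty$. (H4) $\lim_{x\to-1}\operatorname{argmin}_pH(x,p)=-\infty$ and $\lim_{x\to1}\operatorname{argmin}_pH(x,p)=+\infty$. (H5) there are $(y_n^+,q_n^+)\in(-1,1)\times(0,\infty)$ converging to $(1,+\infty)$ with $\partial_pH(y_n^+,q)\ge0$ for $q\ge q_n^+$ and $-\partial_xH(y,q_n^+)\ge0$ for $y\ge y_n^+$, and $(y_n^-,q_n^-)\in(-1,1)\times(-\infty,0)$ converging to $(-1,-\infty)$ with $\partial_pH(y_n^-,q)\le0$ for $q\le q_n^-$ and $-\partial_xH(y,q_n^-)\le0$ for $y\le y_n^-$. *)

theory Defs
  imports "HOL-Analysis.Analysis"
begin

definition Lag :: "(real \<Rightarrow> real \<Rightarrow> real) \<Rightarrow> real \<Rightarrow> real \<Rightarrow> ereal" where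
  "Lag H x v = (SUP p. ereal (p * v - H x p))"

definition C2_1 :: "(real \<Rightarrow> real) \<Rightarrow> real set \<Rightarrow> bool" where
  "C2_1 f U \<longleftrightarrow> (\<exists>f' f''. (\<forall>x\<in>U. (f has_real_derivative f' x) (at x) \<and>
        (f' has_real_derivative f'' x) (at x)) \<and> continuous_on U f'')"

definition C2_2 :: "(real \<Rightarrow> real \<Rightarrow> real) \<Rightarrow> (real \<times> real) set \<Rightarrow> bool" where
  "C2_2 G S \<longleftrightarrow> (\<exists>Gx Gp Gxx Gxp Gpx Gpp.
     (\<forall>z\<in>S. ((\<lambda>(x,p). G x p) has_derivative
          (\<lambda>(h,k). Gx (fst z) (snd z) * h + Gp (fst z) (snd z) * k)) (at z)) \<and>
     (\<forall>z\<in>S. ((\<lambda>(x,p). Gx x p) has_derivative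
          (\<lambda>(h,k). Gxx (fst z) (snd z) * h + Gxp (fst z) (snd z) * k)) (at z)) \<and>
     (\<forall>z\<in>S. ((\<lambda>(x,p). Gp x p) has_derivative
          (\<lambda>(h,k). Gpx (fst z) (snd z) * h + Gpp (fst z) (snd z) * k)) (at z)) \<and>
     continuous_on S (\<lambda>(x,p). Gxx x p) \<and> continuous_on S (\<lambda>(x,p). Gxp x p) \<and>
     continuous_on S (\<lambda>(x,p). Gpx x p) \<and> continuous_on S (\<lambda>(x,p). Gpp x p))"

definition pdx :: "(real \<Rightarrow> real \<Rightarrow> real) \<Rightarrow> real \<Rightarrow> real \<Rightarrow> real" where
  "pdx H x p = (THE D. ((\<lambda>y. H y p) has_real_derivative D) (at x within {-1..1}))"

definition pdp :: "(real \<Rightarrow> real \<Rightarrow> real) \<Rightarrow> real \<Rightarrow> real \<Rightarrow> real" where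
  "pdp H x p = deriv (\<lambda>q. H x q) p"

definition Lag_dx :: "(real \<Rightarrow> real \<Rightarrow> real) \<Rightarrow> real \<Rightarrow> real \<Rightarrow> real \<Rightarrow> bool" where
  "Lag_dx H x v D \<longleftrightarrow> Lag H x v < \<infinity> \<and> (\<forall>\<^sub>F y in at x within {-1..1}. Lag H y v < \<infinity>) \<and>
     ((\<lambda>y. real_of_ereal (Lag H y v)) has_real_derivative D) (at x within {-1..1})"

definition Lag_dv :: "(real \<Rightarrow> real \<Rightarrow> real) \<Rightarrow> real \<Rightarrow> real \<Rightarrow> real \<Rightarrow> bool" where
  "Lag_dv H x v D \<longleftrightarrow> Lag H x v < \<infinity> \<and> (\<forall>\<^sub>F w in at v. Lag H x w < \<infinity>) \<and>
     ((\<lambda>w. real_of_ereal (Lag H x w)) has_real_derivative D) (at v)"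

definition condH0 :: "(real \<Rightarrow> real \<Rightarrow> real) \<Rightarrow> bool" where
  "condH0 H \<longleftrightarrow> (\<forall>x\<in>{-1..1}. H x 0 = 0)"

definition condH1 :: "(real \<Rightarrow> real \<Rightarrow> real) \<Rightarrow> bool" where
  "condH1 H \<longleftrightarrow>
     (\<forall>x\<in>{-1..1}. \<forall>p. deriv (\<lambda>q. deriv (\<lambda>r. H x r) q) p > 0) \<and>
     (\<exists>\<epsilon>>0. \<exists>G. C2_2 G ({-1-\<epsilon><..<1+\<epsilon>} \<times> UNIV) \<and>
        (\<forall>x\<in>{-1..1}. \<forall>p. G x p = H x p))"

definition condH2 :: "(real \<Rightarrow> real \<Rightarrow> real) \<Rightarrow> bool" where
  "condH2 H \<longleftrightarrow> (\<forall>K. compact K \<and> K \<subseteq> {-1<..<1} \<longrightarrow>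
     (\<exists>\<theta>::real\<Rightarrow>real.
        (\<forall>r\<ge>0. \<theta> r \<ge> 0) \<and>
        filterlim (\<lambda>r. \<theta> r / r) at_top at_top \<and>
        (\<forall>M\<ge>0. \<exists>k. \<forall>m\<in>{0..M}. \<forall>r\<ge>0. \<theta> (r + m) \<le> k * (1 + \<theta> r)) \<and>
        (\<exists>c C. \<forall>x\<in>K. \<forall>v.
            Lag H x v \<ge> ereal (\<theta> \<bar>v\<bar> - c) \<and>
            (\<exists>Lx Lv. Lag_dx H x v Lx \<and> Lag_dv H x v Lv \<and> \<bar>Lx\<bar> + \<bar>Lv\<bar> \<le> C * \<theta> \<bar>v\<bar>))))"

definition condH3 :: "(real \<Rightarrow> real \<Rightarrow> real) \<Rightarrow> bool" where
  "condH3 H \<longleftrightarrow>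
     (\<forall>K. compact K \<and> K \<subseteq> {-1<..<1} \<longrightarrow>
        (\<forall>B. \<forall>\<^sub>F p in at_infinity. \<forall>x\<in>K. H x p / \<bar>p\<bar> \<ge> B)) \<and>
     filterlim (\<lambda>p. H (-1) p / p) at_top at_top \<and>
     filterlim (\<lambda>p. H 1 p / (-p)) at_top at_bot"

definition argminH :: "(real \<Rightarrow> real \<Rightarrow> real) \<Rightarrow> real \<Rightarrow> real" where
  "argminH H x = arg_min (H x) (\<lambda>_. True)"

definition condH4 :: "(real \<Rightarrow> real \<Rightarrow> real) \<Rightarrow> bool" where
  "condH4 H \<longleftrightarrow> filterlim (argminH H) at_bot (at_right (-1)) \<and>
                 filterlim (argminH H) at_top (at_left 1)"

definition condH5 :: "(real \<Rightarrow> real \<Rightarrow> real) \<Rightarrow> bool" where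
  "condH5 H \<longleftrightarrow>
    (\<exists>yp qp :: nat \<Rightarrow> real.
       (\<forall>n. yp n \<in> {-1<..<1} \<and> qp n > 0) \<and> yp \<longlonglongrightarrow> 1 \<and> filterlim qp at_top sequentially \<and>
       (\<forall>n. (\<forall>q\<ge>qp n. pdp H (yp n) q \<ge> 0) \<and> (\<forall>y\<in>{yp n..1}. - pdx H y (qp n) \<ge> 0))) \<and>
    (\<exists>ym qm :: nat \<Rightarrow> real.
       (\<forall>n. ym n \<in> {-1<..<1} \<and> qm n < 0) \<and> ym \<longlonglongrightarrow> -1 \<and> filterlim qm at_bot sequentially \<and>
       (\<forall>n. (\<forall>q\<le>qm n. pdp H (ym n) q \<le> 0) \<and> (\<forall>y\<in>{-1..ym n}. - pdx H y (qm n) \<le> 0)))"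

definition condH :: "(real \<Rightarrow> real \<Rightarrow> real) \<Rightarrow> bool" where
  "condH H \<longleftrightarrow> condH0 H \<and> condH1 H \<and> condH2 H \<and> condH3 H \<and> condH4 H \<and> condH5 H"

end

theory Submission
  imports Defs "HOL-Real_Asymp.Real_Asymp"
begin

text \<open>For rates \<open>a, b > 0\<close> the Hamiltonian \<open>p \<mapsto> a (exp (2 p) - 1) + b (exp (-2 p) - 1)\<close> is
  strictly convex and its Legendre transform is attained where \<open>exp (2 p)\<close> solves a quadratic
  equation, so the Lagrangian is explicit and, by the envelope theorem, so are its partial
  derivatives. On a compact \<open>K \<subseteq> (-1, 1)\<close> the rates are bounded and bounded away from \<open>0\<close>; hence
  the Lagrangian grows like \<open>|v| ln |v|\<close> and its derivatives only like \<open>|v|\<close>, which gives (H2)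
  with \<open>\<theta> r = (1 + r) (1 + ln (1 + r)) / 4\<close>, while the exponentials give (H3). The minimiser of
  \<open>H x\<close> is \<open>(ln v\<^sub>- x - ln v\<^sub>+ x) / 4\<close>, which diverges at \<open>\<plusminus>1\<close> because \<open>v\<^sub>\<plusminus>\<close> vanishes there (H4).
  Near \<open>x = 1\<close> the sign \<open>v\<^sub>+' 1 < 0\<close> makes the \<open>x\<close>-derivative of \<open>H y q\<close> negative for large \<open>q\<close>,
  uniformly for \<open>y\<close> close to \<open>1\<close> (H5); the side \<open>x = -1\<close> follows by the reflection \<open>x \<mapsto> -x\<close>.\<close>

section \<open>The Legendre transform of the jump Hamiltonian\<close>

definition jump_ham :: "real \<Rightarrow> real \<Rightarrow> real \<Rightarrow> real" where
  "jump_ham a b p = a * (exp (2 * p) - 1) + b * (exp (- 2 * p) - 1)"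

text \<open>The maximiser of \<open>p * v - jump_ham a b p\<close> is \<open>p = ln Y / 2\<close>, where \<open>Y = jump_root a b v\<close>
  is the positive root of \<open>2 a Y\<^sup>2 - v Y - 2 b = 0\<close>.\<close>
definition jump_root :: "real \<Rightarrow> real \<Rightarrow> real \<Rightarrow> real" where
  "jump_root a b v = (v + sqrt (v\<^sup>2 + 16 * a * b)) / (4 * a)"

definition jump_lag :: "real \<Rightarrow> real \<Rightarrow> real \<Rightarrow> real" where
  "jump_lag a b v = ln (jump_root a b v) / 2 * v - a * (jump_root a b v - 1) - b * (1 / jump_root a b v - 1)"

lemma sqrt_discriminant_gt_abs:
  assumes "a > 0" "b > 0" shows "sqrt (v\<^sup>2 + 16 * a * b) > \<bar>v\<bar>"
  using real_sqrt_less_mono[of "v\<^sup>2" "v\<^sup>2 + 16 * a * b"] assms by simp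

lemma jump_root_pos: assumes "a > 0" "b > 0" shows "jump_root a b v > 0"
  using sqrt_discriminant_gt_abs[OF assms, of v] assms unfolding jump_root_def
  by (intro divide_pos_pos) auto

lemma inverse_jump_root:
  assumes "a > 0" "b > 0" shows "1 / jump_root a b v = (sqrt (v\<^sup>2 + 16 * a * b) - v) / (4 * b)"
proof -
  define s where "s = sqrt (v\<^sup>2 + 16 * a * b)"
  have "s\<^sup>2 = v\<^sup>2 + 16 * a * b" unfolding s_def using assms by simp
  moreover have "v + s > 0" using sqrt_discriminant_gt_abs[OF assms, of v] unfolding s_def by linarith
  ultimately have "4 * a / (v + s) = (s - v) / (4 * b)"
    using assms by (simp add: field_simps power2_eq_square)
  then show ?thesis unfolding jump_root_def s_def[symmetric] by simp
qed

lemma jump_root_stationary: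
  assumes "a > 0" "b > 0" shows "2 * a * jump_root a b v - 2 * b / jump_root a b v = v"
proof -
  define s where "s = sqrt (v\<^sup>2 + 16 * a * b)"
  have "2 * b / jump_root a b v = (s - v) / 2"
    using inverse_jump_root[OF assms, of v] assms unfolding s_def by (simp add: field_simps)
  moreover have "2 * a * jump_root a b v = (v + s) / 2"
    using assms unfolding jump_root_def s_def[symmetric] by simp
  ultimately show ?thesis by simp
qed

lemma jump_ham_conj_le_jump_lag:
  assumes "a > 0" "b > 0" shows "p * v - jump_ham a b p \<le> jump_lag a b v"
proof -
  define Y where "Y = jump_root a b v"
  define t where "t = p - ln Y / 2"
  have Y: "Y > 0" using jump_root_pos[OF assms] Y_def by simp
  have "exp (2 * p) = Y * exp (2 * t)" "exp (- 2 * p) = exp (- 2 * t) / Y"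
    using Y unfolding t_def by (simp_all add: exp_diff exp_minus inverse_eq_divide algebra_simps)
  then have "Y * (1 + 2 * t) \<le> exp (2 * p)" "(1 - 2 * t) / Y \<le> exp (- 2 * p)"
    using Y exp_ge_add_one_self[of "2 * t"] exp_ge_add_one_self[of "- 2 * t"]
    by (simp_all add: divide_right_mono)
  then have "jump_ham a b p \<ge> a * (Y * (1 + 2 * t) - 1) + b * ((1 - 2 * t) / Y - 1)"
    unfolding jump_ham_def using assms by (intro add_mono mult_left_mono) auto
  also have "a * (Y * (1 + 2 * t) - 1) + b * ((1 - 2 * t) / Y - 1)
      = a * (Y - 1) + b * (1 / Y - 1) + t * (2 * a * Y - 2 * b / Y)"
    by (simp add: algebra_simps diff_divide_distrib)
  also have "2 * a * Y - 2 * b / Y = v" using jump_root_stationary[OF assms] Y_def by simp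
  finally show ?thesis unfolding jump_lag_def Y_def[symmetric] t_def by (simp add: algebra_simps)
qed

lemma SUP_jump_ham_eq_jump_lag:
  assumes "a > 0" "b > 0" shows "(SUP p. ereal (p * v - jump_ham a b p)) = ereal (jump_lag a b v)"
proof (rule antisym)
  show "(SUP p. ereal (p * v - jump_ham a b p)) \<le> ereal (jump_lag a b v)"
    using jump_ham_conj_le_jump_lag[OF assms] by (intro SUP_least) simp
  have "jump_lag a b v = ln (jump_root a b v) / 2 * v - jump_ham a b (ln (jump_root a b v) / 2)"
    using jump_root_pos[OF assms, of v]
    unfolding jump_lag_def jump_ham_def by (simp add: exp_minus inverse_eq_divide)
  then show "ereal (jump_lag a b v) \<le> (SUP p. ereal (p * v - jump_ham a b p))"
    by (intro SUP_upper2[where i = "ln (jump_root a b v) / 2"]) simp_all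
qed

text \<open>Envelope theorem: the terms containing the derivative of \<open>jump_root\<close> cancel because of
  \<open>jump_root_stationary\<close>.\<close>
lemma DERIV_jump_lag:
  assumes dA: "(A has_real_derivative A') (at t)" and dB: "(B has_real_derivative B') (at t)"
    and dV: "(V has_real_derivative V') (at t)" and pos: "A t > 0" "B t > 0"
  shows "((\<lambda>t. jump_lag (A t) (B t) (V t)) has_real_derivative
     ln (jump_root (A t) (B t) (V t)) / 2 * V' - A' * (jump_root (A t) (B t) (V t) - 1)
       - B' * (1 / jump_root (A t) (B t) (V t) - 1)) (at t)"
proof -
  define Y where "Y t = jump_root (A t) (B t) (V t)" for t
  have "0 < (V t)\<^sup>2 + 16 * A t * B t" using pos by (simp add: add_nonneg_pos)
  then obtain Y' where dY: "(Y has_real_derivative Y') (at t)"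
    unfolding Y_def jump_root_def using pos
    by (fastforce intro!: derivative_eq_intros DERIV_real_sqrt[THEN DERIV_chain2] dA dB dV)
  have Y: "Y t > 0" unfolding Y_def using jump_root_pos[OF pos] .
  have "V t / (2 * Y t) - A t + B t / (Y t)\<^sup>2 = 0"
    using jump_root_stationary[OF pos, of "V t", folded Y_def, symmetric] Y
    by (simp add: field_simps power2_eq_square)
  moreover have "Y' / Y t / 2 * V t - A t * Y' + B t * Y' / (Y t)\<^sup>2
      = Y' * (V t / (2 * Y t) - A t + B t / (Y t)\<^sup>2)"
    by (simp add: algebra_simps)
  ultimately have cancel: "Y' / Y t / 2 * V t - A t * Y' + B t * Y' / (Y t)\<^sup>2 = 0"
    by simp
  have "((\<lambda>t. ln (Y t) / 2 * V t - A t * (Y t - 1) - B t * (1 / Y t - 1)) has_real_derivative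
     Y' / Y t / 2 * V t + ln (Y t) / 2 * V' - (A' * (Y t - 1) + A t * Y')
       - (B' * (1 / Y t - 1) + B t * (- Y' / (Y t)\<^sup>2))) (at t)"
    using Y by (auto intro!: derivative_eq_intros dY dA dB dV simp: power2_eq_square field_simps)
  then show ?thesis
    unfolding jump_lag_def Y_def[symmetric] using cancel by (simp add: algebra_simps)
qed

section \<open>Growth of the Lagrangian\<close>

definition theta_log :: "real \<Rightarrow> real" where
  "theta_log r = (1 + r) * (1 + ln (1 + r)) / 4"

lemma theta_log_ge: assumes "r \<ge> 0" shows "theta_log r \<ge> (1 + r) / 4"
proof -
  have "(1 + r) * 1 \<le> (1 + r) * (1 + ln (1 + r))" using assms by (intro mult_left_mono) auto
  then show ?thesis unfolding theta_log_def by simp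
qed

lemma theta_log_nonneg: "r \<ge> 0 \<Longrightarrow> theta_log r \<ge> 0"
  using theta_log_ge[of r] by simp

lemma theta_log_superlinear: "filterlim (\<lambda>r. theta_log r / r) at_top at_top"
  unfolding theta_log_def by real_asymp

lemma theta_log_shift_le:
  assumes "0 \<le> m" "m \<le> M" "0 \<le> r"
  shows "theta_log (r + m) \<le> (1 + M) * (1 + ln (1 + M)) * (1 + theta_log r)"
proof -
  have "0 \<le> M * r" "(1 + M) * (1 + r) = 1 + r + M + M * r"
    using assms by (simp_all add: algebra_simps)
  then have grow: "1 + (r + m) \<le> (1 + M) * (1 + r)"
    using assms by linarith
  then have "ln (1 + (r + m)) \<le> ln ((1 + M) * (1 + r))"
    using assms by (subst ln_le_cancel_iff) auto
  also have "\<dots> = ln (1 + M) + ln (1 + r)" using assms by (simp add: ln_mult)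
  finally have "ln (1 + (r + m)) \<le> ln (1 + M) + ln (1 + r)" .
  moreover have "0 \<le> ln (1 + M) * ln (1 + r)" using assms by simp
  ultimately have "1 + ln (1 + (r + m)) \<le> (1 + ln (1 + M)) * (1 + ln (1 + r))"
    by (simp add: algebra_simps)
  with grow have "(1 + (r + m)) * (1 + ln (1 + (r + m)))
      \<le> ((1 + M) * (1 + r)) * ((1 + ln (1 + M)) * (1 + ln (1 + r)))"
    using assms by (intro mult_mono) auto
  then have "theta_log (r + m) \<le> (1 + M) * (1 + ln (1 + M)) * theta_log r"
    unfolding theta_log_def by (simp add: mult_ac)
  also have "\<dots> \<le> (1 + M) * (1 + ln (1 + M)) * (1 + theta_log r)"
    using assms by (intro mult_left_mono) auto
  finally show ?thesis .
qed

lemma jump_ham_le: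
  assumes "0 \<le> a" "a \<le> M" "0 \<le> b" "b \<le> M"
  shows "jump_ham a b p \<le> M * (exp (2 * \<bar>p\<bar>) - 1)"
proof (cases "p \<ge> 0")
  case True
  then have "a * (exp (2 * p) - 1) \<le> M * (exp (2 * p) - 1)" "b * (exp (- 2 * p) - 1) \<le> 0"
    using assms by (auto intro: mult_right_mono mult_nonneg_nonpos)
  then show ?thesis using True unfolding jump_ham_def by simp
next
  case False
  then have "b * (exp (- 2 * p) - 1) \<le> M * (exp (- 2 * p) - 1)" "a * (exp (2 * p) - 1) \<le> 0"
    using assms by (auto intro: mult_right_mono mult_nonneg_nonpos)
  moreover have "exp (2 * \<bar>p\<bar>) = exp (- 2 * p)" using False by simp
  ultimately show ?thesis unfolding jump_ham_def by simp
qed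

text \<open>If \<open>ln (1 + r) \<ge> 4 M + 2\<close> the gain \<open>r ln (1 + r) / 4\<close> pays for the loss \<open>(M + 1/2) r\<close>;
  otherwise \<open>r < exp (4 M + 2)\<close>.\<close>
lemma theta_log_le_gain:
  assumes r: "r \<ge> 0" and M: "M \<ge> 0"
  shows "theta_log r - (M + 1) * exp (4 * M + 2) \<le> r * ln (1 + r) / 2 - M * r"
proof -
  define l where "l = ln (1 + r)"
  define A where "A = 4 * M + 2"
  have l: "0 \<le> l" "l \<le> r" "exp l = 1 + r" using r unfolding l_def by (auto intro: ln_add_one_self_le_self)
  have "r * (l - A) \<ge> - A * exp A"
  proof (cases "l \<ge> A")
    case True
    then have "r * (l - A) \<ge> 0" using r by simp
    moreover have "A * exp A \<ge> 0" using M unfolding A_def by simp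
    ultimately show ?thesis by linarith
  next
    case False
    then have "r \<le> exp A" using l exp_less_cancel_iff[of l A] by linarith
    then have "r * A \<le> exp A * A" using M unfolding A_def by (intro mult_right_mono) auto
    moreover have "r * (l - A) \<ge> r * (- A)" using r l by (intro mult_left_mono) auto
    ultimately show ?thesis by (simp add: algebra_simps)
  qed
  moreover have "exp A \<ge> 1" using M unfolding A_def by simp
  moreover have "theta_log r = (1 + r + l + r * l) / 4"
    unfolding theta_log_def l_def by (simp add: algebra_simps)
  moreover have "r * (l - A) = r * l - 4 * (M * r) - 2 * r" "A * exp A = 4 * (M * exp A) + 2 * exp A"
    "(M + 1) * exp A = M * exp A + exp A" "- A * exp A = - (A * exp A)"
    unfolding A_def by (simp_all add: algebra_simps)
  ultimately show ?thesis using l unfolding l_def[symmetric] A_def[symmetric] by argo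
qed

lemma jump_lag_ge_theta_log:
  assumes "0 < a" "a \<le> M" "0 < b" "b \<le> M"
  shows "jump_lag a b v \<ge> theta_log \<bar>v\<bar> - (M + 1) * exp (4 * M + 2)"
proof -
  define r where "r = \<bar>v\<bar>"
  define l where "l = ln (1 + r)"
  define p where "p = sgn v * l / 2"
  have r: "r \<ge> 0" and l: "0 \<le> l" "exp l = 1 + r" and M: "M \<ge> 0"
    using assms unfolding r_def l_def by auto
  have "p * v = r * l / 2" "\<bar>p\<bar> \<le> l / 2"
    using l unfolding p_def r_def by (auto simp: sgn_if)
  then have "M * (exp (2 * \<bar>p\<bar>) - 1) \<le> M * r"
    using M l exp_le_cancel_iff[of "2 * \<bar>p\<bar>" l] by (intro mult_left_mono) auto
  then have "p * v - jump_ham a b p \<ge> r * l / 2 - M * r"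
    using jump_ham_le[of a M b p] assms \<open>p * v = r * l / 2\<close> by linarith
  then have "jump_lag a b v \<ge> r * l / 2 - M * r"
    using jump_ham_conj_le_jump_lag[OF assms(1,3)] by (meson order_trans)
  then show ?thesis using theta_log_le_gain[OF r M] unfolding r_def l_def by linarith
qed

lemma abs_ln_le:
  fixes y R :: real
  assumes "0 < y" "y \<le> R" "1 / y \<le> R" shows "\<bar>ln y\<bar> \<le> R"
  using ln_le_minus_one[OF assms(1)] ln_le_minus_one[of "1 / y"] assms by (simp add: ln_div)

lemma jump_root_bounds:
  fixes v :: real
  assumes "0 < d" "d \<le> a" "a \<le> M" "d \<le> b" "b \<le> M"
  defines "R \<equiv> (1 + M) * (1 + \<bar>v\<bar>) / d"
  shows "jump_root a b v \<le> R" "1 / jump_root a b v \<le> R"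
proof -
  have ab: "a > 0" "b > 0" and M: "M \<ge> 0" using assms by auto
  define S where "S = sqrt (v\<^sup>2 + 16 * a * b)"
  have "a * b \<le> M * M" using assms by (intro mult_mono) auto
  moreover have "(\<bar>v\<bar> + 4 * M)\<^sup>2 = v\<^sup>2 + 8 * (M * \<bar>v\<bar>) + 16 * (M * M)"
    by (simp add: power2_eq_square algebra_simps)
  moreover have "M * \<bar>v\<bar> \<ge> 0" using M by simp
  ultimately have "v\<^sup>2 + 16 * a * b \<le> (\<bar>v\<bar> + 4 * M)\<^sup>2" by linarith
  then have "S \<le> \<bar>v\<bar> + 4 * M" unfolding S_def using M real_sqrt_le_mono by fastforce
  moreover have "4 * ((1 + M) * (1 + \<bar>v\<bar>)) = 4 + 4 * M + 4 * \<bar>v\<bar> + 4 * (M * \<bar>v\<bar>)"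
    by (simp add: algebra_simps)
  ultimately have "\<bar>v\<bar> + S \<le> 4 * ((1 + M) * (1 + \<bar>v\<bar>))"
    using \<open>M * \<bar>v\<bar> \<ge> 0\<close> by linarith
  then have "(\<bar>v\<bar> + S) / (4 * c) \<le> 4 * ((1 + M) * (1 + \<bar>v\<bar>)) / (4 * d)" if "d \<le> c" for c
    using that assms(1) M by (intro frac_le) (auto simp: S_def)
  then have bound: "(\<bar>v\<bar> + S) / (4 * c) \<le> R" if "d \<le> c" for c
    using that unfolding R_def by simp
  have "jump_root a b v \<le> (\<bar>v\<bar> + S) / (4 * a)"
    unfolding jump_root_def S_def using ab by (intro divide_right_mono) auto
  then show "jump_root a b v \<le> R" using bound[of a] assms by simp
  have "1 / jump_root a b v \<le> (\<bar>v\<bar> + S) / (4 * b)"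
    unfolding inverse_jump_root[OF ab] S_def using ab by (intro divide_right_mono) auto
  then show "1 / jump_root a b v \<le> R" using bound[of b] assms by simp
qed

lemma jump_lag_deriv_bound:
  fixes v :: real
  assumes "0 < d" "d \<le> a" "a \<le> M" "d \<le> b" "b \<le> M" "\<bar>a'\<bar> \<le> M" "\<bar>b'\<bar> \<le> M"
  defines "Y \<equiv> jump_root a b v"
  shows "\<bar>- (a' * (Y - 1)) - b' * (1 / Y - 1)\<bar> + \<bar>ln Y / 2\<bar> \<le> (1 + 2 * M) * (1 + M) / d * (1 + \<bar>v\<bar>)"
proof -
  define R where "R = (1 + M) * (1 + \<bar>v\<bar>) / d"
  have Y: "0 < Y" "Y \<le> R" "1 / Y \<le> R"
    using jump_root_pos[of a b v] jump_root_bounds[OF assms(1-5), of v] assms(1-4)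
    unfolding Y_def R_def by auto
  have "1 + M \<le> (1 + M) * (1 + \<bar>v\<bar>)"
    using mult_left_mono[of 1 "1 + \<bar>v\<bar>" "1 + M"] assms(1-3) by simp
  then have "d \<le> (1 + M) * (1 + \<bar>v\<bar>)" using assms(1-3) by linarith
  then have "1 \<le> R" unfolding R_def using assms(1) by (simp add: le_divide_eq)
  moreover have "1 / Y > 0" using Y by simp
  ultimately have "\<bar>Y - 1\<bar> \<le> R" "\<bar>1 / Y - 1\<bar> \<le> R" using Y by (intro abs_leI; linarith)+
  then have "\<bar>a' * (Y - 1)\<bar> \<le> M * R" "\<bar>b' * (1 / Y - 1)\<bar> \<le> M * R"
    using assms by (auto simp: abs_mult intro: mult_mono)
  moreover have "\<bar>ln Y / 2\<bar> \<le> R" using abs_ln_le[OF Y] \<open>1 \<le> R\<close> by simp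
  ultimately have "\<bar>- (a' * (Y - 1)) - b' * (1 / Y - 1)\<bar> + \<bar>ln Y / 2\<bar> \<le> (1 + 2 * M) * R"
    by (simp add: algebra_simps)
  then show ?thesis unfolding R_def by simp
qed

section \<open>The Hamiltonian as a function of the momentum\<close>

lemma DERIV_jump_ham:
  "(jump_ham a b has_real_derivative 2 * a * exp (2 * p) - 2 * b * exp (- 2 * p)) (at p)"
  unfolding jump_ham_def by (auto intro!: derivative_eq_intros)

lemma deriv_jump_ham: "deriv (jump_ham a b) p = 2 * a * exp (2 * p) - 2 * b * exp (- 2 * p)"
  by (rule DERIV_imp_deriv[OF DERIV_jump_ham])

lemma deriv2_jump_ham: "deriv (deriv (jump_ham a b)) p = 4 * a * exp (2 * p) + 4 * b * exp (- 2 * p)"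
  unfolding deriv_jump_ham[abs_def] by (rule DERIV_imp_deriv) (auto intro!: derivative_eq_intros)

lemma deriv_jump_ham_nonneg_iff:
  assumes "a > 0" "b > 0"
  shows "0 \<le> deriv (jump_ham a b) p \<longleftrightarrow> (ln b - ln a) / 4 \<le> p"
proof -
  have "exp (- 2 * p) * exp (4 * p) = exp (2 * p)" by (simp flip: exp_add)
  then have "deriv (jump_ham a b) p = 2 * exp (- 2 * p) * (a * exp (4 * p) - b)"
    unfolding deriv_jump_ham by (simp add: algebra_simps)
  then have "0 \<le> deriv (jump_ham a b) p \<longleftrightarrow> b \<le> a * exp (4 * p)"
    by (simp add: zero_le_mult_iff)
  also have "\<dots> \<longleftrightarrow> ln b \<le> ln (a * exp (4 * p))"
    using assms by (subst ln_le_cancel_iff) auto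
  also have "ln (a * exp (4 * p)) = ln a + 4 * p"
    using assms by (simp add: ln_mult)
  finally show ?thesis by (simp add: field_simps)
qed

lemma deriv_jump_ham_swap: "deriv (jump_ham b a) p = - deriv (jump_ham a b) (- p)"
  unfolding deriv_jump_ham by simp

lemma jump_ham_ge:
  assumes "0 \<le> d" "d \<le> a" "d \<le> b" "a \<le> M" "b \<le> M"
  shows "jump_ham a b p \<ge> d * (exp (2 * \<bar>p\<bar>) - 1) - M"
proof -
  have "a * (exp (2 * p) - 1) \<ge> - M" "b * (exp (- 2 * p) - 1) \<ge> - M"
    using assms mult_left_mono[of "-1" "exp (2 * p) - 1" a] mult_left_mono[of "-1" "exp (- 2 * p) - 1" b]
    by auto
  moreover have "a * (exp (2 * p) - 1) \<ge> d * (exp (2 * \<bar>p\<bar>) - 1)" if "p \<ge> 0"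
    using assms that mult_right_mono[of d a "exp (2 * p) - 1"] by simp
  moreover have "b * (exp (- 2 * p) - 1) \<ge> d * (exp (2 * \<bar>p\<bar>) - 1)" if "p < 0"
    using assms that mult_right_mono[of d b "exp (- 2 * p) - 1"] by simp
  ultimately show ?thesis unfolding jump_ham_def by (cases "p \<ge> 0") linarith+
qed

lemma jump_ham_nonpos:
  assumes "a \<le> - \<alpha>" "\<alpha> > 0" "\<bar>b\<bar> \<le> M" "M \<le> 2 * \<alpha> * q"
  shows "jump_ham a b q \<le> 0"
proof -
  have "0 \<le> (2 * \<alpha>) * q" using assms by linarith
  then have q: "q \<ge> 0" using assms by (simp add: zero_le_mult_iff)
  have "2 * q \<le> exp (2 * q) - 1" using exp_ge_add_one_self[of "2 * q"] by linarith
  then have "a * (exp (2 * q) - 1) \<le> - \<alpha> * (2 * q)"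
    using assms q mult_right_mono[of a "- \<alpha>" "exp (2 * q) - 1"]
      mult_left_mono[of "2 * q" "exp (2 * q) - 1" \<alpha>]
    by linarith
  moreover have "\<bar>exp (- 2 * q) - 1\<bar> \<le> 1" using q by simp
  then have "\<bar>b\<bar> * \<bar>exp (- 2 * q) - 1\<bar> \<le> M * 1" using assms by (intro mult_mono) auto
  then have "b * (exp (- 2 * q) - 1) \<le> M" by (metis abs_le_D1 abs_mult mult_1_right)
  ultimately show ?thesis unfolding jump_ham_def using assms by simp
qed

lemma arg_min_jump_ham:
  assumes "a > 0" "b > 0"
  shows "arg_min (jump_ham a b) (\<lambda>_. True) = (ln b - ln a) / 4"
proof -
  define p0 where "p0 = (ln b - ln a) / 4"
  define k where "k = a * exp (2 * p0)"
  have "4 * p0 = ln b - ln a" unfolding p0_def by simp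
  then have "exp (4 * p0) = b / a" using assms by (simp add: exp_diff)
  moreover have "exp (4 * p0) = exp (2 * p0) * exp (2 * p0)" by (simp add: mult_exp_exp)
  ultimately have "b = k * exp (2 * p0)" using assms unfolding k_def by (simp add: field_simps)
  then have bk: "b * exp (- 2 * p0) = k" by (simp add: mult_exp_exp)
  have exp_split: "exp (2 * (p0 + t)) = exp (2 * p0) * exp (2 * t)"
    "exp (- 2 * (p0 + t)) = exp (- 2 * p0) * exp (- 2 * t)" for t
    by (simp_all add: mult_exp_exp algebra_simps)
  have at_shift: "jump_ham a b (p0 + t) = k * (exp (2 * t) + exp (- 2 * t)) - a - b" for t
    unfolding jump_ham_def exp_split using bk unfolding k_def by (simp add: algebra_simps)
  have at_min: "jump_ham a b p0 = 2 * k - a - b"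
    unfolding jump_ham_def using bk unfolding k_def by (simp add: algebra_simps)
  have square: "(exp t - exp (- t))\<^sup>2 = exp (2 * t) + exp (- 2 * t) - 2" for t :: real
    by (simp add: power2_eq_square algebra_simps mult_exp_exp)
  have shift: "jump_ham a b (p0 + t) = jump_ham a b p0 + k * (exp t - exp (- t))\<^sup>2" for t
    unfolding at_shift at_min square by (simp add: algebra_simps)
  have "k > 0" using assms unfolding k_def by simp
  then have less: "jump_ham a b p0 < jump_ham a b p" if "p \<noteq> p0" for p
    using shift[of "p - p0"] that by simp
  then have "is_arg_min (jump_ham a b) (\<lambda>_. True) p0"
    unfolding is_arg_min_def by (metis not_less_iff_gr_or_eq)
  then show ?thesis unfolding arg_min_def p0_def[symmetric]
    by (rule some_equality) (metis is_arg_min_def less)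
qed

section \<open>Smoothness\<close>

lemma C2_1_DERIV:
  assumes "C2_1 f U" "x \<in> U" shows "(f has_real_derivative deriv f x) (at x)"
proof -
  obtain f' where "(f has_real_derivative f' x) (at x)"
    using assms unfolding C2_1_def by blast
  then show ?thesis by (simp add: DERIV_imp_deriv)
qed

lemma C2_1_continuous_on_deriv:
  assumes "C2_1 f U" shows "continuous_on U (deriv f)"
proof -
  obtain f' f'' where d: "\<forall>x\<in>U. (f has_real_derivative f' x) (at x) \<and> (f' has_real_derivative f'' x) (at x)"
    using assms unfolding C2_1_def by blast
  then have "continuous_on U f'"
    by (intro continuous_at_imp_continuous_on ballI) (auto intro: DERIV_isCont)
  then show ?thesis
    by (rule continuous_on_eq) (use d in \<open>auto intro: DERIV_imp_deriv[symmetric]\<close>)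
qed

lemma C2_1_subset: "C2_1 f U \<Longrightarrow> W \<subseteq> U \<Longrightarrow> C2_1 f W"
  unfolding C2_1_def by (blast intro: continuous_on_subset)

lemma C2_1_exp_affine: "C2_1 (\<lambda>p. exp (c * p) - 1) UNIV"
  unfolding C2_1_def
  by (rule exI[of _ "\<lambda>p. c * exp (c * p)"], rule exI[of _ "\<lambda>p. c * c * exp (c * p)"])
     (auto intro!: derivative_eq_intros continuous_intros)

lemma has_derivative_separable_sum:
  assumes "(A has_real_derivative A') (at x)" "(B has_real_derivative B') (at x)"
    "(C has_real_derivative C') (at p)" "(D has_real_derivative D') (at p)"
  shows "((\<lambda>(x, p). A x * C p + B x * D p) has_derivative
           (\<lambda>(h, k). (A' * C p + B' * D p) * h + (A x * C' + B x * D') * k)) (at (x, p))"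
proof -
  have "((\<lambda>z. A (fst z) * C (snd z) + B (fst z) * D (snd z)) has_derivative
      (\<lambda>z. A x * (C' * snd z) + A' * fst z * C p + (B x * (D' * snd z) + B' * fst z * D p))) (at (x, p))"
    using assms unfolding has_field_derivative_def
    by (auto intro!: derivative_eq_intros has_derivative_compose[of fst _ _ _ A]
        has_derivative_compose[of fst _ _ _ B] has_derivative_compose[of snd _ _ _ C]
        has_derivative_compose[of snd _ _ _ D])
  then show ?thesis
    unfolding case_prod_unfold by (rule has_derivative_eq_rhs) (simp add: fun_eq_iff algebra_simps)
qed

lemma continuous_on_separable_sum:
  fixes A B C D :: "real \<Rightarrow> real"
  assumes "continuous_on W A" "continuous_on W B" "continuous_on UNIV C" "continuous_on UNIV D"
  shows "continuous_on (W \<times> UNIV) (\<lambda>(x, p). A x * C p + B x * D p)"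
proof -
  have fst: "continuous_on (W \<times> UNIV) (\<lambda>z::real \<times> real. F (fst z))" if "continuous_on W F" for F :: "real \<Rightarrow> real"
    using that by (auto intro!: continuous_on_compose2[of W F] continuous_intros)
  have snd: "continuous_on (W \<times> UNIV) (\<lambda>z::real \<times> real. G (snd z))" if "continuous_on UNIV G" for G :: "real \<Rightarrow> real"
    using that by (auto intro!: continuous_on_compose2[of UNIV G] continuous_intros)
  show ?thesis
    unfolding case_prod_unfold using assms by (intro continuous_on_add continuous_on_mult fst snd)
qed

lemma C2_2_separable_sum:
  assumes "C2_1 A W" "C2_1 B W" "C2_1 C UNIV" "C2_1 D UNIV"
  shows "C2_2 (\<lambda>x p. A x * C p + B x * D p) (W \<times> UNIV)"
proof -
  have C2_1_cont: "continuous_on U f \<and> continuous_on U f' \<and> continuous_on U f''"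
    if "\<forall>x\<in>U. (f has_real_derivative f' x) (at x) \<and> (f' has_real_derivative f'' x) (at x)"
      "continuous_on U f''" for f f' f'' :: "real \<Rightarrow> real" and U
    using that by (auto intro!: continuous_at_imp_continuous_on DERIV_isCont)
  obtain A' A'' B' B'' C' C'' D' D'' where
    A: "\<forall>x\<in>W. (A has_real_derivative A' x) (at x) \<and> (A' has_real_derivative A'' x) (at x)"
      "continuous_on W A''" and
    B: "\<forall>x\<in>W. (B has_real_derivative B' x) (at x) \<and> (B' has_real_derivative B'' x) (at x)"
      "continuous_on W B''" and
    C: "\<forall>p\<in>UNIV. (C has_real_derivative C' p) (at p) \<and> (C' has_real_derivative C'' p) (at p)"
      "continuous_on UNIV C''" and
    D: "\<forall>p\<in>UNIV. (D has_real_derivative D' p) (at p) \<and> (D' has_real_derivative D'' p) (at p)"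
      "continuous_on UNIV D''"
    using assms unfolding C2_1_def by blast
  note cont = C2_1_cont[OF A] C2_1_cont[OF B] C2_1_cont[OF C] C2_1_cont[OF D]
  show ?thesis
    unfolding C2_2_def
    by (rule exI[of _ "\<lambda>x p. A' x * C p + B' x * D p"], rule exI[of _ "\<lambda>x p. A x * C' p + B x * D' p"],
        rule exI[of _ "\<lambda>x p. A'' x * C p + B'' x * D p"], rule exI[of _ "\<lambda>x p. A' x * C' p + B' x * D' p"],
        rule exI[of _ "\<lambda>x p. A' x * C' p + B' x * D' p"], rule exI[of _ "\<lambda>x p. A x * C'' p + B x * D'' p"])
      (use A B C D cont in \<open>auto intro!: has_derivative_separable_sum continuous_on_separable_sum\<close>)
qed

section \<open>Behaviour near the boundary\<close>

lemma ln_diff_at_bot: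
  fixes f g :: "'a \<Rightarrow> real"
  assumes "(f \<longlongrightarrow> 0) F" "\<forall>\<^sub>F x in F. f x > 0" "(g \<longlongrightarrow> c) F" "c > 0"
  shows "filterlim (\<lambda>x. ln (f x) - ln (g x)) at_bot F"
proof -
  have "filterlim f (at_right 0) F"
    using assms(1,2) unfolding filterlim_at by (auto elim: eventually_mono)
  then have "filterlim (\<lambda>x. ln (f x)) at_bot F" by (rule filterlim_compose[OF ln_at_0])
  moreover have "((\<lambda>x. - ln (g x)) \<longlongrightarrow> - ln c) F" using assms(3,4) by (intro tendsto_intros) auto
  ultimately show ?thesis
    using filterlim_tendsto_add_at_bot_iff[of "\<lambda>x. - ln (g x)" "- ln c" F "\<lambda>x. ln (f x)"] by simp
qed

lemma exists_boundary_sequences: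
  fixes A B A' B' :: "real \<Rightarrow> real"
  assumes pos: "\<And>y. y \<in> {-1<..<1} \<Longrightarrow> A y > 0 \<and> B y > 0"
    and A'_cont: "isCont A' 1" and A'_neg: "A' 1 < 0"
    and B'_bound: "\<And>y. y \<in> {-1..1} \<Longrightarrow> \<bar>B' y\<bar> \<le> M"
  shows "\<exists>yp qp :: nat \<Rightarrow> real. (\<forall>n. yp n \<in> {-1<..<1} \<and> qp n > 0) \<and> yp \<longlonglongrightarrow> 1 \<and>
    filterlim qp at_top sequentially \<and>
    (\<forall>n. (\<forall>q\<ge>qp n. 0 \<le> deriv (jump_ham (A (yp n)) (B (yp n))) q) \<and>
         (\<forall>y\<in>{yp n..1}. jump_ham (A' y) (B' y) (qp n) \<le> 0))"
proof -
  define \<alpha> where "\<alpha> = - A' 1 / 2"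
  have \<alpha>: "\<alpha> > 0" unfolding \<alpha>_def using A'_neg by simp
  obtain \<rho> where \<rho>: "\<rho> > 0" and near: "\<forall>y. dist y 1 < \<rho> \<longrightarrow> dist (A' y) (A' 1) < \<alpha>"
    using A'_cont \<alpha> unfolding continuous_at_eps_delta by blast
  have A'_le: "A' y < - \<alpha>" if "\<bar>y - 1\<bar> < \<rho>" for y
    using near that unfolding dist_real_def \<alpha>_def by force
  have M: "M \<ge> 0" using B'_bound[of 0] by simp
  define s where "s = min 1 (\<rho> / 2)"
  define yp where "yp n = 1 - s / (1 + real n)" for n
  \<comment> \<open>\<open>qp n\<close> lies beyond the minimiser of \<open>jump_ham (A (yp n)) (B (yp n))\<close> and beyond \<open>M / (2 \<alpha>)\<close>\<close>
  define qp where "qp n = real n + 1 + M / (2 * \<alpha>) + \<bar>(ln (B (yp n)) - ln (A (yp n))) / 4\<bar>" for n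
  have s: "0 < s" "s \<le> 1" "s < \<rho>" unfolding s_def using \<rho> by auto
  have step: "0 < s / (1 + real n)" "s / (1 + real n) \<le> s" for n
    using s by (auto simp: field_simps)
  have yp: "yp n \<in> {-1<..<1}" for n using step[of n] s unfolding yp_def by auto
  have qp: "real n + 1 \<le> qp n" "M / (2 * \<alpha>) \<le> qp n"
    "(ln (B (yp n)) - ln (A (yp n))) / 4 \<le> qp n" for n
  proof -
    have "M / (2 * \<alpha>) \<ge> 0" using M \<alpha> by simp
    then show "real n + 1 \<le> qp n" "M / (2 * \<alpha>) \<le> qp n"
      "(ln (B (yp n)) - ln (A (yp n))) / 4 \<le> qp n"
      unfolding qp_def by linarith+
  qed
  have "(\<lambda>n. s / (1 + real n)) \<longlonglongrightarrow> 0"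
    by (rule real_tendsto_divide_at_top[OF tendsto_const
          filterlim_tendsto_add_at_top[OF tendsto_const filterlim_real_sequentially]])
  then have lim_yp: "yp \<longlonglongrightarrow> 1 - 0" unfolding yp_def by (intro tendsto_diff tendsto_const)
  have lim_qp: "filterlim qp at_top sequentially"
  proof (rule filterlim_at_top_mono[OF filterlim_real_sequentially always_eventually], rule allI)
    show "real n \<le> qp n" for n using qp(1)[of n] by linarith
  qed
  have deriv_nonneg: "0 \<le> deriv (jump_ham (A (yp n)) (B (yp n))) q" if "q \<ge> qp n" for n q
    using deriv_jump_ham_nonneg_iff[of "A (yp n)" "B (yp n)" q] pos[OF yp[of n]] qp(3)[of n] that
    by auto
  have ham_nonpos: "jump_ham (A' y) (B' y) (qp n) \<le> 0" if "y \<in> {yp n..1}" for n y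
  proof (rule jump_ham_nonpos)
    show "A' y \<le> - \<alpha>" using that step[of n] s A'_le[of y] unfolding yp_def by auto
    show "\<bar>B' y\<bar> \<le> M" using that yp[of n] B'_bound[of y] by auto
    show "M \<le> 2 * \<alpha> * qp n" using qp(2)[of n] \<alpha> by (simp add: field_simps)
  qed (rule \<alpha>)
  have qp_pos: "qp n > 0" for n using qp(1)[of n] by simp
  show ?thesis
    by (rule exI[of _ yp], rule exI[of _ qp]) (use qp_pos yp lim_yp lim_qp deriv_nonneg ham_nonpos in auto)
qed

section \<open>Jump rates vanishing at the boundary\<close>

locale jump_rates =
  fixes vp vm :: "real \<Rightarrow> real" and U :: "real set"
  assumes open_U: "open U" and interval_U: "{-1..1} \<subseteq> U"
    and C2_vp: "C2_1 vp U" and C2_vm: "C2_1 vm U"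
    and vp_1: "vp 1 = 0" and vm_m1: "vm (-1) = 0"
    and vp_pos: "\<forall>x\<in>{-1..1}. x \<noteq> 1 \<longrightarrow> vp x > 0"
    and vm_pos: "\<forall>x\<in>{-1..1}. x \<noteq> -1 \<longrightarrow> vm x > 0"
    and deriv_vp_1: "deriv vp 1 < 0" and deriv_vm_m1: "deriv vm (-1) > 0"
begin

abbreviation H :: "real \<Rightarrow> real \<Rightarrow> real" where
  "H \<equiv> \<lambda>x. jump_ham (vp x) (vm x)"

lemma interior_pos: "x \<in> {-1<..<1} \<Longrightarrow> vp x > 0 \<and> vm x > 0"
  using vp_pos vm_pos by auto

lemma rates_nonneg:
  assumes "x \<in> {-1..1}" shows "vp x \<ge> 0 \<and> vm x \<ge> 0 \<and> (vp x > 0 \<or> vm x > 0)"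
proof -
  have "vp x > 0 \<or> x = 1" "vm x > 0 \<or> x = -1" using assms vp_pos vm_pos by auto
  then show ?thesis using vp_1 vm_m1 by fastforce
qed

lemma DERIV_vp: "x \<in> {-1..1} \<Longrightarrow> (vp has_real_derivative deriv vp x) (at x)"
  and DERIV_vm: "x \<in> {-1..1} \<Longrightarrow> (vm has_real_derivative deriv vm x) (at x)"
  using C2_1_DERIV[OF C2_vp] C2_1_DERIV[OF C2_vm] interval_U by auto

lemma continuous_on_deriv: "continuous_on {-1..1} (deriv vp)" "continuous_on {-1..1} (deriv vm)"
  using C2_1_continuous_on_deriv[OF C2_vp] C2_1_continuous_on_deriv[OF C2_vm] interval_U
  by (auto intro: continuous_on_subset)

lemma continuous_on_rates: "continuous_on {-1..1} vp" "continuous_on {-1..1} vm"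
  by (rule continuous_at_imp_continuous_on, blast intro: DERIV_isCont DERIV_vp DERIV_vm)+

lemma isCont_deriv: "x \<in> {-1..1} \<Longrightarrow> isCont (deriv vp) x" "x \<in> {-1..1} \<Longrightarrow> isCont (deriv vm) x"
  using C2_1_continuous_on_deriv[OF C2_vp] C2_1_continuous_on_deriv[OF C2_vm] interval_U open_U
  by (auto simp: continuous_on_eq_continuous_at)

lemma condH0_H: "condH0 H"
  unfolding condH0_def jump_ham_def by simp

lemma condH1_H: "condH1 H"
  unfolding condH1_def
proof (intro conjI ballI allI)
  fix x p :: real assume "x \<in> {-1..1}"
  then have "vp x \<ge> 0" "vm x \<ge> 0" "vp x > 0 \<or> vm x > 0" using rates_nonneg by auto
  then show "0 < deriv (\<lambda>q. deriv (\<lambda>r. H x r) q) p"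
    unfolding deriv2_jump_ham by (auto intro: add_pos_nonneg add_nonneg_pos)
next
  obtain \<epsilon> where \<epsilon>: "\<epsilon> > 0" "(\<Union>x\<in>{-1..1}. ball x \<epsilon>) \<subseteq> U"
    using compact_subset_open_imp_ball_epsilon_subset[OF compact_Icc open_U interval_U] by blast
  have "{-1-\<epsilon><..<1+\<epsilon>} \<subseteq> U"
  proof
    fix y assume y: "y \<in> {-1-\<epsilon><..<1+\<epsilon>}"
    have "y \<in> ball (max (-1) (min 1 y)) \<epsilon>" using y \<epsilon>(1) by (auto simp: dist_real_def max_def min_def)
    moreover have "max (-1) (min 1 y) \<in> {-1..1}" by auto
    ultimately show "y \<in> U" using \<epsilon>(2) by blast
  qed
  then have "C2_2 H ({-1-\<epsilon><..<1+\<epsilon>} \<times> UNIV)"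
    unfolding jump_ham_def
    using C2_2_separable_sum[OF C2_1_subset[OF C2_vp] C2_1_subset[OF C2_vm]
        C2_1_exp_affine[of 2] C2_1_exp_affine[of "-2"]] by simp
  then show "\<exists>\<epsilon>>0. \<exists>G. C2_2 G ({-1-\<epsilon><..<1+\<epsilon>} \<times> UNIV) \<and> (\<forall>x\<in>{-1..1}. \<forall>p. G x p = H x p)"
    using \<epsilon>(1) by (intro exI[of _ \<epsilon>] conjI exI[of _ H]) auto
qed

lemma compact_bounds:
  assumes "compact K" "K \<subseteq> {-1<..<1}"
  obtains d M where "d > 0" "\<And>x. x \<in> K \<Longrightarrow> d \<le> vp x \<and> vp x \<le> M \<and> d \<le> vm x \<and> vm x \<le> M \<and>
      \<bar>deriv vp x\<bar> \<le> M \<and> \<bar>deriv vm x\<bar> \<le> M"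
proof -
  have KI: "K \<subseteq> {-1..1}" using assms(2) by auto
  have cont: "continuous_on K vp" "continuous_on K vm" "continuous_on K (deriv vp)" "continuous_on K (deriv vm)"
    using continuous_on_subset[OF _ KI] continuous_on_rates continuous_on_deriv by auto
  obtain B where B: "\<And>f x. f \<in> {vp, vm, deriv vp, deriv vm} \<Longrightarrow> x \<in> K \<Longrightarrow> \<bar>f x\<bar> \<le> B"
  proof -
    obtain B1 B2 B3 B4 where "\<And>x. x \<in> K \<Longrightarrow> \<bar>vp x\<bar> \<le> B1 \<and> \<bar>vm x\<bar> \<le> B2 \<and> \<bar>deriv vp x\<bar> \<le> B3 \<and> \<bar>deriv vm x\<bar> \<le> B4"
      using continuous_on_compact_bound[OF assms(1) cont(1)] continuous_on_compact_bound[OF assms(1) cont(2)]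
        continuous_on_compact_bound[OF assms(1) cont(3)] continuous_on_compact_bound[OF assms(1) cont(4)]
      by (metis real_norm_def)
    then show ?thesis using that[of "max (max B1 B2) (max B3 B4)"] by fastforce
  qed
  obtain d where "d > 0" "\<And>x. x \<in> K \<Longrightarrow> d \<le> vp x \<and> d \<le> vm x"
  proof (cases "K = {}")
    case False
    have "continuous_on K (\<lambda>x. min (vp x) (vm x))" using cont by (intro continuous_intros)
    then obtain s where "s \<in> K" "\<And>x. x \<in> K \<Longrightarrow> min (vp s) (vm s) \<le> min (vp x) (vm x)"
      using continuous_attains_inf[OF assms(1) False] by blast
    then show ?thesis using that[of "min (vp s) (vm s)"] interior_pos assms(2) by force
  qed (use that[of 1] in simp)
  then show ?thesis using that[of d B] B by (meson abs_ge_self insertCI order_trans)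
qed

lemma Lag_H: "x \<in> {-1<..<1} \<Longrightarrow> Lag H x v = ereal (jump_lag (vp x) (vm x) v)"
  unfolding Lag_def using SUP_jump_ham_eq_jump_lag interior_pos by simp

lemma Lag_dx_H:
  assumes x: "x \<in> {-1<..<1}"
  shows "Lag_dx H x v (- (deriv vp x * (jump_root (vp x) (vm x) v - 1))
    - deriv vm x * (1 / jump_root (vp x) (vm x) v - 1))" (is "Lag_dx H x v ?D")
  unfolding Lag_dx_def
proof (intro conjI)
  show "Lag H x v < \<infinity>" using Lag_H[OF x] by simp
  show "\<forall>\<^sub>F y in at x within {-1..1}. Lag H y v < \<infinity>"
    unfolding eventually_at_topological by (rule exI[of _ "{-1<..<1}"]) (use x Lag_H in auto)
  have "x \<in> {-1..1}" using x by auto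
  with interior_pos[OF x] have "((\<lambda>y. jump_lag (vp y) (vm y) v) has_real_derivative ?D) (at x)"
    using DERIV_jump_lag[OF DERIV_vp DERIV_vm DERIV_const[of v]] by simp
  then have "((\<lambda>y. real_of_ereal (Lag H y v)) has_real_derivative ?D) (at x)"
    by (rule has_field_derivative_transform_within_open[OF _ open_greaterThanLessThan x]) (simp add: Lag_H)
  then show "((\<lambda>y. real_of_ereal (Lag H y v)) has_real_derivative ?D) (at x within {-1..1})"
    by (rule has_field_derivative_at_within)
qed

lemma Lag_dv_H:
  assumes x: "x \<in> {-1<..<1}"
  shows "Lag_dv H x v (ln (jump_root (vp x) (vm x) v) / 2)"
  unfolding Lag_dv_def Lag_H[OF x]
  using DERIV_jump_lag[OF DERIV_const[of "vp x" "at v"] DERIV_const[of "vm x" "at v"] DERIV_ident]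
    interior_pos[OF x]
  by simp

lemma Lag_derivs_le_theta_log:
  assumes x: "x \<in> {-1<..<1}" and "0 < d" "d \<le> vp x" "vp x \<le> B" "d \<le> vm x" "vm x \<le> B"
    "\<bar>deriv vp x\<bar> \<le> B" "\<bar>deriv vm x\<bar> \<le> B"
  defines "C \<equiv> 4 * ((1 + 2 * B) * (1 + B) / d)"
  shows "\<exists>Lx Lv. Lag_dx H x v Lx \<and> Lag_dv H x v Lv \<and> \<bar>Lx\<bar> + \<bar>Lv\<bar> \<le> C * theta_log \<bar>v\<bar>"
proof -
  define Y where "Y = jump_root (vp x) (vm x) v"
  have "Lag_dx H x v (- (deriv vp x * (Y - 1)) - deriv vm x * (1 / Y - 1))" "Lag_dv H x v (ln Y / 2)"
    unfolding Y_def using Lag_dx_H Lag_dv_H x by auto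
  moreover define c where "c = (1 + 2 * B) * (1 + B) / d"
  have "c \<ge> 0" using assms(2-4) unfolding c_def by simp
  then have "c * (1 + \<bar>v\<bar>) \<le> C * theta_log \<bar>v\<bar>"
    using theta_log_ge[of "\<bar>v\<bar>"] mult_left_mono[of "(1 + \<bar>v\<bar>) / 4" "theta_log \<bar>v\<bar>" c]
    unfolding C_def c_def[symmetric] by simp
  then have "\<bar>- (deriv vp x * (Y - 1)) - deriv vm x * (1 / Y - 1)\<bar> + \<bar>ln Y / 2\<bar> \<le> C * theta_log \<bar>v\<bar>"
    using jump_lag_deriv_bound[of d "vp x" B "vm x" "deriv vp x" "deriv vm x" v] assms(2-8)
    unfolding Y_def c_def by linarith
  ultimately show ?thesis by blast
qed

lemma condH2_H: "condH2 H"
  unfolding condH2_def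
proof (intro allI impI)
  fix K :: "real set" assume K: "compact K \<and> K \<subseteq> {-1<..<1}"
  then obtain d B where d: "d > 0" and bnd: "\<And>x. x \<in> K \<Longrightarrow> d \<le> vp x \<and> vp x \<le> B \<and> d \<le> vm x \<and>
      vm x \<le> B \<and> \<bar>deriv vp x\<bar> \<le> B \<and> \<bar>deriv vm x\<bar> \<le> B"
    using compact_bounds by blast
  have lower: "Lag H x v \<ge> ereal (theta_log \<bar>v\<bar> - (B + 1) * exp (4 * B + 2))" if "x \<in> K" for x v
    using Lag_H jump_lag_ge_theta_log bnd[OF that] d K that by auto
  have derivs: "\<exists>Lx Lv. Lag_dx H x v Lx \<and> Lag_dv H x v Lv \<and>
      \<bar>Lx\<bar> + \<bar>Lv\<bar> \<le> 4 * ((1 + 2 * B) * (1 + B) / d) * theta_log \<bar>v\<bar>" if "x \<in> K" for x v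
    using Lag_derivs_le_theta_log[of x d B v] bnd[OF that] d K that by blast
  have "\<forall>M\<ge>0. \<exists>k. \<forall>m\<in>{0..M}. \<forall>r\<ge>0. theta_log (r + m) \<le> k * (1 + theta_log r)"
  proof (intro allI impI)
    fix M :: real assume "M \<ge> 0"
    then show "\<exists>k. \<forall>m\<in>{0..M}. \<forall>r\<ge>0. theta_log (r + m) \<le> k * (1 + theta_log r)"
      using theta_log_shift_le by (intro exI[of _ "(1 + M) * (1 + ln (1 + M))"]) auto
  qed
  moreover have "\<exists>c C. \<forall>x\<in>K. \<forall>v. Lag H x v \<ge> ereal (theta_log \<bar>v\<bar> - c) \<and>
      (\<exists>Lx Lv. Lag_dx H x v Lx \<and> Lag_dv H x v Lv \<and> \<bar>Lx\<bar> + \<bar>Lv\<bar> \<le> C * theta_log \<bar>v\<bar>)"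
    by (rule exI[of _ "(B + 1) * exp (4 * B + 2)"], rule exI[of _ "4 * ((1 + 2 * B) * (1 + B) / d)"])
      (use lower derivs in blast)
  ultimately show "\<exists>\<theta>. (\<forall>r\<ge>0. \<theta> r \<ge> 0) \<and> filterlim (\<lambda>r. \<theta> r / r) at_top at_top \<and>
      (\<forall>M\<ge>0. \<exists>k. \<forall>m\<in>{0..M}. \<forall>r\<ge>0. \<theta> (r + m) \<le> k * (1 + \<theta> r)) \<and>
      (\<exists>c C. \<forall>x\<in>K. \<forall>v. Lag H x v \<ge> ereal (\<theta> \<bar>v\<bar> - c) \<and>
        (\<exists>Lx Lv. Lag_dx H x v Lx \<and> Lag_dv H x v Lv \<and> \<bar>Lx\<bar> + \<bar>Lv\<bar> \<le> C * \<theta> \<bar>v\<bar>))"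
    using theta_log_nonneg theta_log_superlinear by (intro exI[of _ theta_log]) auto
qed


lemma condH3_H: "condH3 H"
  unfolding condH3_def
proof (intro conjI allI impI)
  fix K :: "real set" and B :: real assume K: "compact K \<and> K \<subseteq> {-1<..<1}"
  obtain d M where d: "d > 0" and bnd: "\<And>x. x \<in> K \<Longrightarrow> d \<le> vp x \<and> vp x \<le> M \<and> d \<le> vm x \<and> vm x \<le> M \<and>
      \<bar>deriv vp x\<bar> \<le> M \<and> \<bar>deriv vm x\<bar> \<le> M"
    using compact_bounds K by blast
  have "filterlim (\<lambda>r. (d * (exp (2 * r) - 1) - M) / r) at_top at_top" using d by real_asymp
  then have "\<forall>\<^sub>F r in at_top. B \<le> (d * (exp (2 * r) - 1) - M) / r \<and> r > 0"
    by (intro eventually_conj eventually_gt_at_top) (simp add: filterlim_at_top)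
  then have "\<forall>\<^sub>F p in at_infinity. B \<le> (d * (exp (2 * norm p) - 1) - M) / norm p \<and> norm p > (0::real)"
    using filterlim_norm_at_top unfolding filterlim_iff by blast
  then show "\<forall>\<^sub>F p in at_infinity. \<forall>x\<in>K. H x p / \<bar>p\<bar> \<ge> B"
  proof eventually_elim
    case (elim p)
    have "(d * (exp (2 * \<bar>p\<bar>) - 1) - M) / \<bar>p\<bar> \<le> H x p / \<bar>p\<bar>" if "x \<in> K" for x
      using jump_ham_ge[of d "vp x" "vm x" M p] bnd[OF that] d by (intro divide_right_mono) auto
    then show ?case using elim by force
  qed
next
  have "vp (-1) > 0" using vp_pos by simp
  then have "filterlim (\<lambda>p. vp (-1) * (exp (2 * p) - 1) / p) at_top at_top" by real_asymp
  then show "filterlim (\<lambda>p. H (-1) p / p) at_top at_top"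
    by (simp add: jump_ham_def vm_m1)
next
  have "vm 1 > 0" using vm_pos by simp
  then have "filterlim (\<lambda>p. vm 1 * (exp (2 * p) - 1) / p) at_top at_top" by real_asymp
  then show "filterlim (\<lambda>p. H 1 p / - p) at_top at_bot"
    by (simp add: filterlim_at_bot_mirror jump_ham_def vp_1)
qed

lemma argminH_H: "x \<in> {-1<..<1} \<Longrightarrow> argminH H x = (ln (vm x) - ln (vp x)) / 4"
  unfolding argminH_def using arg_min_jump_ham interior_pos by simp

lemma tendsto_rates_within:
  assumes "x \<in> {-1..1}" shows "(vp \<longlongrightarrow> vp x) (at x within S)" "(vm \<longlongrightarrow> vm x) (at x within S)"
  using DERIV_isCont[OF DERIV_vp[OF assms]] DERIV_isCont[OF DERIV_vm[OF assms]]
  by (simp_all add: continuous_at_imp_continuous_within continuous_within[symmetric])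

lemma condH4_H: "condH4 H"
  unfolding condH4_def
proof
  have interior: "\<forall>\<^sub>F x in at_right (-1). x \<in> {-1<..<1::real}"
    using eventually_at_right_real[of "-1" "1::real"] by simp
  have "filterlim (\<lambda>x. ln (vm x) - ln (vp x)) at_bot (at_right (-1))"
    using tendsto_rates_within[of "-1"] interior vm_m1 vp_pos vm_pos
    by (intro ln_diff_at_bot[where c = "vp (-1)"]) (auto elim!: eventually_mono)
  then have "filterlim (\<lambda>x. (ln (vm x) - ln (vp x)) / 4) at_bot (at_right (-1))"
    using filterlim_tendsto_pos_mult_at_bot[OF tendsto_const[of "1 / 4"]] by simp
  then show "filterlim (argminH H) at_bot (at_right (-1))"
    by (rule filterlim_cong[OF refl refl, THEN iffD1, rotated])
      (use interior in \<open>auto elim!: eventually_mono simp: argminH_H\<close>)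
next
  have interior: "\<forall>\<^sub>F x in at_left 1. x \<in> {-1<..<1::real}"
    using eventually_at_left_real[of "-1::real" "1"] by simp
  have "filterlim (\<lambda>x. ln (vp x) - ln (vm x)) at_bot (at_left 1)"
    using tendsto_rates_within[of 1] interior vp_1 vp_pos vm_pos
    by (intro ln_diff_at_bot[where c = "vm 1"]) (auto elim!: eventually_mono)
  then have "filterlim (\<lambda>x. (ln (vp x) - ln (vm x)) / 4) at_bot (at_left 1)"
    using filterlim_tendsto_pos_mult_at_bot[OF tendsto_const[of "1 / 4"]] by simp
  then have "filterlim (\<lambda>x. - ((ln (vp x) - ln (vm x)) / 4)) at_top (at_left 1)"
    by (rule filterlim_uminus_at_bot[THEN iffD1])
  then show "filterlim (argminH H) at_top (at_left 1)"
    by (rule filterlim_cong[OF refl refl, THEN iffD1, rotated])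
      (use interior in \<open>auto elim!: eventually_mono simp: argminH_H field_simps\<close>)
qed

lemma pdp_H: "pdp H y q = deriv (jump_ham (vp y) (vm y)) q"
  unfolding pdp_def ..

lemma pdx_H:
  assumes y: "y \<in> {-1..1}" shows "pdx H y q = jump_ham (deriv vp y) (deriv vm y) q"
  unfolding pdx_def
proof (rule the_equality)
  have "((\<lambda>y. H y q) has_real_derivative jump_ham (deriv vp y) (deriv vm y) q) (at y)"
    unfolding jump_ham_def by (auto intro!: derivative_eq_intros DERIV_vp[OF y] DERIV_vm[OF y])
  then show D: "((\<lambda>y. H y q) has_real_derivative jump_ham (deriv vp y) (deriv vm y) q) (at y within {-1..1})"
    by (rule has_field_derivative_at_within)
  fix D' assume "((\<lambda>y. H y q) has_real_derivative D') (at y within {-1..1})"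
  with D show "D' = jump_ham (deriv vp y) (deriv vm y) q"
    using vector_derivative_unique_within_closed_interval[of "-1" 1 y] y
    unfolding has_real_derivative_iff_has_vector_derivative cbox_interval by auto
qed

lemma deriv_bounded:
  obtains M where "\<And>y. y \<in> {-1..1} \<Longrightarrow> \<bar>deriv vp y\<bar> \<le> M \<and> \<bar>deriv vm y\<bar> \<le> M"
  using continuous_on_compact_bound[OF compact_Icc continuous_on_deriv(1)]
    continuous_on_compact_bound[OF compact_Icc continuous_on_deriv(2)]
  by (metis real_norm_def max.coboundedI1 max.coboundedI2)

lemma condH5_right:
  "\<exists>yp qp :: nat \<Rightarrow> real.
     (\<forall>n. yp n \<in> {-1<..<1} \<and> qp n > 0) \<and> yp \<longlonglongrightarrow> 1 \<and> filterlim qp at_top sequentially \<and>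
     (\<forall>n. (\<forall>q\<ge>qp n. pdp H (yp n) q \<ge> 0) \<and> (\<forall>y\<in>{yp n..1}. - pdx H y (qp n) \<ge> 0))"
proof -
  obtain M where M: "\<And>y. y \<in> {-1..1} \<Longrightarrow> \<bar>deriv vp y\<bar> \<le> M \<and> \<bar>deriv vm y\<bar> \<le> M"
    using deriv_bounded by blast
  obtain yp qp :: "nat \<Rightarrow> real" where yq: "\<forall>n. yp n \<in> {-1<..<1} \<and> qp n > 0" "yp \<longlonglongrightarrow> 1"
    "filterlim qp at_top sequentially"
    and seq: "\<forall>n. (\<forall>q\<ge>qp n. 0 \<le> deriv (jump_ham (vp (yp n)) (vm (yp n))) q) \<and>
       (\<forall>y\<in>{yp n..1}. jump_ham (deriv vp y) (deriv vm y) (qp n) \<le> 0)"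
    using exists_boundary_sequences[of vp vm "deriv vp" "deriv vm" M] interior_pos isCont_deriv(1)[of 1]
      deriv_vp_1 M by auto
  show ?thesis
  proof (rule exI[of _ yp], rule exI[of _ qp], intro conjI[OF yq(1)] conjI[OF yq(2)] conjI[OF yq(3)]
      allI conjI ballI impI)
    fix n y assume y: "y \<in> {yp n..1}"
    moreover have "-1 < yp n" using yq(1) by simp
    ultimately have "pdx H y (qp n) = jump_ham (deriv vp y) (deriv vm y) (qp n)" by (intro pdx_H) auto
    moreover have "jump_ham (deriv vp y) (deriv vm y) (qp n) \<le> 0"
      by (rule seq[rule_format, THEN conjunct2, rule_format, OF y])
    ultimately show "0 \<le> - pdx H y (qp n)" by simp
  next
    fix n q assume "qp n \<le> q"
    then show "0 \<le> pdp H (yp n) q" unfolding pdp_H using seq by simp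
  qed
qed

text \<open>The side \<open>x \<rightarrow> -1\<close> is the side \<open>x \<rightarrow> 1\<close> for the reflected rates \<open>vm (- x)\<close>, \<open>vp (- x)\<close>.\<close>
lemma condH5_left:
  "\<exists>ym qm :: nat \<Rightarrow> real.
     (\<forall>n. ym n \<in> {-1<..<1} \<and> qm n < 0) \<and> ym \<longlonglongrightarrow> -1 \<and> filterlim qm at_bot sequentially \<and>
     (\<forall>n. (\<forall>q\<le>qm n. pdp H (ym n) q \<le> 0) \<and> (\<forall>y\<in>{-1..ym n}. - pdx H y (qm n) \<le> 0))"
proof -
  obtain M where M: "\<And>y. y \<in> {-1..1} \<Longrightarrow> \<bar>deriv vp y\<bar> \<le> M \<and> \<bar>deriv vm y\<bar> \<le> M"
    using deriv_bounded by blast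
  have "isCont (\<lambda>y. - deriv vm (- y)) 1"
    using isCont_deriv(2)[of "-1"]
    by (intro isCont_minus isCont_o2[where f = uminus, OF isCont_minus[OF continuous_ident]]) simp
  then obtain ym qm :: "nat \<Rightarrow> real" where yq: "\<forall>n. ym n \<in> {-1<..<1} \<and> qm n > 0" "ym \<longlonglongrightarrow> 1"
    "filterlim qm at_top sequentially"
    and seq: "\<forall>n. (\<forall>q\<ge>qm n. 0 \<le> deriv (jump_ham (vm (- ym n)) (vp (- ym n))) q) \<and>
       (\<forall>y\<in>{ym n..1}. jump_ham (- deriv vm (- y)) (- deriv vp (- y)) (qm n) \<le> 0)"
    using exists_boundary_sequences[of "\<lambda>y. vm (- y)" "\<lambda>y. vp (- y)" "\<lambda>y. - deriv vm (- y)"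
        "\<lambda>y. - deriv vp (- y)" M] interior_pos deriv_vm_m1 M
    by auto
  show ?thesis
  proof (rule exI[of _ "\<lambda>n. - ym n"], rule exI[of _ "\<lambda>n. - qm n"],
      intro conjI allI ballI impI tendsto_minus[OF yq(2), simplified] filterlim_uminus_at_top[THEN iffD1, OF yq(3)])
    fix n y assume y: "y \<in> {-1..- ym n}"
    moreover have "-1 < ym n" using yq(1) by simp
    ultimately have "pdx H y (- qm n) = - jump_ham (- deriv vm y) (- deriv vp y) (qm n)"
      using pdx_H[of y "- qm n"] by (simp add: jump_ham_def)
    moreover have "jump_ham (- deriv vm (- (- y))) (- deriv vp (- (- y))) (qm n) \<le> 0"
      using y by (intro seq[rule_format, THEN conjunct2, rule_format]) auto
    ultimately show "- pdx H y (- qm n) \<le> 0" by simp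
  next
    fix n q assume "q \<le> - qm n"
    then have "0 \<le> deriv (jump_ham (vm (- ym n)) (vp (- ym n))) (- q)"
      using seq by simp
    then show "pdp H (- ym n) q \<le> 0" unfolding pdp_H deriv_jump_ham_swap[of "vp _"] by simp
  qed (use yq(1) in auto)
qed

lemma condH5_H: "condH5 H"
  unfolding condH5_def using condH5_right condH5_left by (rule conjI)

end

theorem lemmaA1:
  fixes vp vm :: "real \<Rightarrow> real"
  assumes nonneg: "\<forall>x\<in>{-1..1}. vp x \<ge> 0 \<and> vm x \<ge> 0"
    and vm_zero: "vm (-1) = 0" and vm_pos: "\<forall>x\<in>{-1..1}. x \<noteq> -1 \<longrightarrow> vm x > 0"
    and vp_zero: "vp 1 = 0" and vp_pos: "\<forall>x\<in>{-1..1}. x \<noteq> 1 \<longrightarrow> vp x > 0"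
    and smooth: "\<exists>U. open U \<and> {-1..1} \<subseteq> U \<and> C2_1 vp U \<and> C2_1 vm U"
    and vp_deriv: "deriv vp 1 < 0" and vm_deriv: "deriv vm (-1) > 0"
  shows "condH (\<lambda>x p. vp x * (exp (2 * p) - 1) + vm x * (exp (- 2 * p) - 1))"
proof -
  obtain U where "open U" "{-1..1} \<subseteq> U" "C2_1 vp U" "C2_1 vm U" using smooth by blast
  then interpret jump_rates vp vm U
    using vm_zero vp_zero vp_pos vm_pos vp_deriv vm_deriv by unfold_locales
  have "(\<lambda>x p. vp x * (exp (2 * p) - 1) + vm x * (exp (- 2 * p) - 1)) = H"
    by (simp add: jump_ham_def fun_eq_iff)
  then show ?thesis
    unfolding condH_def using condH0_H condH1_H condH2_H condH3_H condH4_H condH5_H by simp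
qed

end
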